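(* Let $V$ be a real vector space of dimension $d$, and $G$ a group of affine-linear transformations of $V$ including all translations. Then the dilation component $\rho_0\colon\mathcal{CB}(V,G)\to\mathcal{CB}(V,G)$ is a group homomorphism, and the dilation components $\rho_1,\ldots,\rho_d\colon[0,\infty)\times\mathcal{CB}(V,G)\to\mathcal{CB}(V,G)$ are group homomorphisms in their second variable.
   Context: $\mathcal{K}(V)$ is the set of nonempty compact convex subsets of $V$ with the Hausdorff metric topology. $\mathcal{CB}(V,G)$ is the quotient (with quotient topology) of the free Hausdorff topological abelian group $\mathbb{Z}\mathcal{K}(V)$ on $\mathcal{K}(V)$ (the Hausdorff topological abelian group with continuous map $X\mapsto[X]$ through which every continuous map from $\mathcal{K}(V)$ to a Hausdorff topological abelian group factors uniquely via a continuous homomorphism) by the closure of the subgroup generated by all $[B\cup C]-[B]-[C]+[B\cap C]$ ($B,C,B\cup C\in\mathcal{K}(V)$) and all $[X]-[gX]$ ($g\in G$); images are still written $[X]$. The dilation map $D\colon[0,\infty)\times\mathcal{CB}(V,G)\to\mathcal{CB}(V,G)$ is the unique continuous map that is a homomorphism in its second variable with $D(\lambda,[X])=[\lambda X]$. The dilation components are the uniquely determined continuous maps $\rho_0\colon\mathcal{CB}(V,G)\to\mathcal{CB}(V,G)$ and $\rho_1,\ldots,\rho_d\colon[0,\infty)\times\mathcal{CB}(V,G)\to\mathcal{CB}(V,G)$ such that each $\rho_i(-,x)$ ($i\geqslant1$) is a semigroup homomorphism $([0,\infty),+)\to\mathcal{CB}(V,G)$ and $D(\lambda,x)=\rho_0(x)+\rho_1(\lambda^1,x)+\cdots+\rho_d(\lambda^d,x)$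 for all $\lambda\in[0,\infty)$, $x\in\mathcal{CB}(V,G)$. *)

theory Defs
  imports "HOL-Analysis.Analysis"
begin

definition hausdorff_dist :: "'v::euclidean_space set \<Rightarrow> 'v set \<Rightarrow> real" where
  "hausdorff_dist X Y = max (SUP x\<in>X. infdist x Y) (SUP y\<in>Y. infdist y X)"

definition Kset :: "'v::euclidean_space set set" where
  "Kset = {X. X \<noteq> {} \<and> compact X \<and> convex X}"

definition Ktop :: "'v::euclidean_space set topology" where
  "Ktop = topology (\<lambda>U. U \<subseteq> Kset \<and>
      (\<forall>X\<in>U. \<exists>e>0. \<forall>Y\<in>Kset. hausdorff_dist X Y < e \<longrightarrow> Y \<in> U))"

text \<open>Elements of Z K(V): finitely supported integer-valued functions on K(V).\<close>
definition ZK :: "('v::euclidean_space set \<Rightarrow> int) set" where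
  "ZK = {f. finite {X. f X \<noteq> 0} \<and> {X. f X \<noteq> 0} \<subseteq> Kset}"

definition zadd :: "('a \<Rightarrow> int) \<Rightarrow> ('a \<Rightarrow> int) \<Rightarrow> ('a \<Rightarrow> int)" where
  "zadd f g = (\<lambda>X. f X + g X)"

definition zneg :: "('a \<Rightarrow> int) \<Rightarrow> ('a \<Rightarrow> int)" where
  "zneg f = (\<lambda>X. - f X)"

definition zzero :: "'a \<Rightarrow> int" where
  "zzero = (\<lambda>X. 0)"

definition zgen :: "'a \<Rightarrow> ('a \<Rightarrow> int)" where
  "zgen X = (\<lambda>Y. if Y = X then 1 else 0)"

definition hausdorff_group_topology :: "('v::euclidean_space set \<Rightarrow> int) topology \<Rightarrow> bool" where
  "hausdorff_group_topology T \<longleftrightarrow> topspace T = ZK \<and> Hausdorff_space T \<and>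
     continuous_map (prod_topology T T) T (\<lambda>(f, g). zadd f g) \<and>
     continuous_map T T zneg"

text \<open>The free Hausdorff topological abelian group topology: the finest Hausdorff group
  topology on Z K(V) for which the map X \<mapsto> [X] is continuous (this is exactly the
  topology with the stated universal property).\<close>
definition FZtop :: "('v::euclidean_space set \<Rightarrow> int) topology" where
  "FZtop = topology_generated_by
     (\<Union>{{U. openin T U} | T. hausdorff_group_topology T \<and> continuous_map Ktop T zgen})"

definition zspan :: "('a \<Rightarrow> int) set \<Rightarrow> ('a \<Rightarrow> int) set" where
  "zspan A = \<Inter>{H. A \<subseteq> H \<and> zzero \<in> H \<and> (\<forall>f\<in>H. \<forall>g\<in>H. zadd f g \<in> H) \<and> (\<forall>f\<in>H. zneg f \<in> H)}"

definition CBrels :: "('v::euclidean_space \<Rightarrow> 'v) set \<Rightarrow> ('v set \<Rightarrow> int) set" where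
  "CBrels G =
     {zadd (zadd (zadd (zgen (B \<union> C)) (zneg (zgen B))) (zneg (zgen C))) (zgen (B \<inter> C)) | B C.
        B \<in> Kset \<and> C \<in> Kset \<and> B \<union> C \<in> Kset}
   \<union> {zadd (zgen X) (zneg (zgen (g ` X))) | X g. X \<in> Kset \<and> g \<in> G}"

definition CBker :: "('v::euclidean_space \<Rightarrow> 'v) set \<Rightarrow> ('v set \<Rightarrow> int) set" where
  "CBker G = FZtop closure_of (zspan (CBrels G))"

definition cls :: "('v::euclidean_space \<Rightarrow> 'v) set \<Rightarrow> ('v set \<Rightarrow> int) \<Rightarrow> ('v set \<Rightarrow> int) set" where
  "cls G f = {g \<in> ZK. zadd g (zneg f) \<in> CBker G}"

definition CB :: "('v::euclidean_space \<Rightarrow> 'v) set \<Rightarrow> ('v set \<Rightarrow> int) set set" where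
  "CB G = cls G ` ZK"

definition cbadd :: "('v set \<Rightarrow> int) set \<Rightarrow> ('v set \<Rightarrow> int) set \<Rightarrow> ('v set \<Rightarrow> int) set" where
  "cbadd x y = {zadd a b | a b. a \<in> x \<and> b \<in> y}"

definition CBtop :: "('v::euclidean_space \<Rightarrow> 'v) set \<Rightarrow> ('v set \<Rightarrow> int) set topology" where
  "CBtop G = topology (\<lambda>U. U \<subseteq> CB G \<and> openin FZtop {f \<in> ZK. cls G f \<in> U})"

definition cbclass :: "('v::euclidean_space \<Rightarrow> 'v) set \<Rightarrow> 'v set \<Rightarrow> ('v set \<Rightarrow> int) set" where
  "cbclass G X = cls G (zgen X)"

definition RCBtop :: "('v::euclidean_space \<Rightarrow> 'v) set \<Rightarrow> (real \<times> ('v set \<Rightarrow> int) set) topology" where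
  "RCBtop G = prod_topology (subtopology euclideanreal {0..}) (CBtop G)"

definition affine_group_with_translations :: "('v::euclidean_space \<Rightarrow> 'v) set \<Rightarrow> bool" where
  "affine_group_with_translations G \<longleftrightarrow>
     (\<forall>g\<in>G. \<exists>f c. linear f \<and> bij f \<and> g = (\<lambda>x. f x + c)) \<and>
     id \<in> G \<and> (\<forall>g\<in>G. \<forall>h\<in>G. g \<circ> h \<in> G) \<and> (\<forall>g\<in>G. inv g \<in> G) \<and>
     (\<forall>c. (\<lambda>x. x + c) \<in> G)"

primrec iter_sum :: "('c \<Rightarrow> 'c \<Rightarrow> 'c) \<Rightarrow> (nat \<Rightarrow> 'c) \<Rightarrow> 'c \<Rightarrow> nat \<Rightarrow> 'c" where
  "iter_sum p f b 0 = b"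
| "iter_sum p f b (Suc n) = p (iter_sum p f b n) (f (Suc n))"

definition is_dilation_map ::
  "('v::euclidean_space \<Rightarrow> 'v) set \<Rightarrow> (real \<Rightarrow> ('v set \<Rightarrow> int) set \<Rightarrow> ('v set \<Rightarrow> int) set) \<Rightarrow> bool" where
  "is_dilation_map G D \<longleftrightarrow>
     continuous_map (RCBtop G) (CBtop G) (\<lambda>(l, x). D l x) \<and>
     (\<forall>l\<ge>0. \<forall>x\<in>CB G. \<forall>y\<in>CB G. D l (cbadd x y) = cbadd (D l x) (D l y)) \<and>
     (\<forall>l\<ge>0. \<forall>X\<in>Kset. D l (cbclass G X) = cbclass G ((\<lambda>v. l *\<^sub>R v) ` X))"

definition are_dilation_components ::
  "('v::euclidean_space \<Rightarrow> 'v) set \<Rightarrow> (real \<Rightarrow> ('v set \<Rightarrow> int) set \<Rightarrow> ('v set \<Rightarrow> int) set)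
   \<Rightarrow> (('v set \<Rightarrow> int) set \<Rightarrow> ('v set \<Rightarrow> int) set)
   \<Rightarrow> (nat \<Rightarrow> real \<Rightarrow> ('v set \<Rightarrow> int) set \<Rightarrow> ('v set \<Rightarrow> int) set) \<Rightarrow> bool" where
  "are_dilation_components G D \<rho>0 \<rho> \<longleftrightarrow>
     continuous_map (CBtop G) (CBtop G) \<rho>0 \<and>
     (\<forall>i\<in>{1..DIM('v)}.
        continuous_map (RCBtop G) (CBtop G) (\<lambda>(l, x). \<rho> i l x) \<and>
        (\<forall>x\<in>CB G. \<forall>a\<ge>0. \<forall>b\<ge>0. \<rho> i (a + b) x = cbadd (\<rho> i a x) (\<rho> i b x))) \<and>
     (\<forall>l\<ge>0. \<forall>x\<in>CB G. D l x = iter_sum cbadd (\<lambda>i. \<rho> i (l ^ i) x) (\<rho>0 x) DIM('v))"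

end

(*
  CB(V,G) is an abelian group, since the closure of the relation subgroup is again closed under
  addition. This needs the free Hausdorff group topology to live on all of Z K(V), i.e. some
  admissible group topology to exist: the "tent" functions X \<mapsto> max 0 (r - d(X,Y)) embed
  Z K(V) injectively into a product of real lines, and the pulled-back topology qualifies.

  Fix x and y. The maps e_i t = \<rho>_i(t, x+y) - \<rho>_i(t, x) - \<rho>_i(t, y) are additive on
  [0,\<infinity>), and additivity of D(\<lambda>, -) says that c + \<Sum>_i e_i(\<lambda>^i) = 0 for all \<lambda> \<ge> 0,
  where c = \<rho>_0(x+y) - \<rho>_0(x) - \<rho>_0(y). Such an expansion is trivial: \<lambda> = 0 gives c = 0,
  and comparing \<lambda> \<mapsto> 2\<lambda> with scaling all arguments by 2^d removes the top coefficient,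
  so induction on d shows that every e_i vanishes.
*)
theory Submission
  imports Defs "HOL-Library.Function_Algebras" "HOL-Algebra.FiniteProduct"
begin

section \<open>Expansions in powers with additive coefficients\<close>

definition nonneg_reals :: "real monoid" where
  "nonneg_reals = \<lparr>carrier = {0..}, mult = (+), one = 0\<rparr>"

lemma hom_nonneg_reals_iff:
  "e \<in> hom nonneg_reals G \<longleftrightarrow>
     (\<forall>t\<ge>0. e t \<in> carrier G) \<and> (\<forall>a\<ge>0. \<forall>b\<ge>0. e (a + b) = e a \<otimes>\<^bsub>G\<^esub> e b)"
  by (auto simp: hom_def nonneg_reals_def)

lemma hom_nonneg_reals_scale:
  assumes "e \<in> hom nonneg_reals G" "c \<ge> 0"
  shows "(\<lambda>t. e (c * t)) \<in> hom nonneg_reals G"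
  using assms by (simp add: hom_nonneg_reals_iff distrib_left)

lemma (in group) hom_nonneg_reals_zero:
  assumes "e \<in> hom nonneg_reals G"
  shows "e 0 = \<one>"
proof -
  have "e 0 \<in> carrier G" "e (0 + 0) = e 0 \<otimes> e 0"
    using assms unfolding hom_nonneg_reals_iff by blast+
  then show ?thesis by simp
qed

lemma (in comm_monoid) hom_mult_pointwise:
  assumes "a \<in> hom M G" "b \<in> hom M G"
  shows "(\<lambda>x. a x \<otimes> b x) \<in> hom M G"
proof (rule homI)
  fix x y assume "x \<in> carrier M" "y \<in> carrier M"
  then show "a (x \<otimes>\<^bsub>M\<^esub> y) \<otimes> b (x \<otimes>\<^bsub>M\<^esub> y) = (a x \<otimes> b x) \<otimes> (a y \<otimes> b y)"
    using assms by (simp add: hom_mult hom_in_carrier m_ac)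
qed (use assms in \<open>simp add: hom_in_carrier\<close>)

lemma (in comm_group) hom_inv_pointwise:
  assumes "a \<in> hom M G"
  shows "(\<lambda>x. inv (a x)) \<in> hom M G"
  using assms by (intro homI) (simp_all add: hom_mult hom_in_carrier inv_mult)

lemma (in comm_group) finprod_inv:
  assumes "f \<in> A \<rightarrow> carrier G"
  shows "(\<Otimes>i\<in>A. inv (f i)) = inv (\<Otimes>i\<in>A. f i)"
proof -
  have "(\<Otimes>i\<in>A. inv (f i)) \<otimes> (\<Otimes>i\<in>A. f i) = (\<Otimes>i\<in>A. inv (f i) \<otimes> f i)"
    using assms by (simp add: finprod_multf Pi_iff)
  also have "\<dots> = \<one>"
    using assms by (intro finprod_one_eqI) (simp add: Pi_iff)
  finally show ?thesis
    using assms by (intro inv_equality[symmetric]) (auto simp: Pi_iff)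
qed

lemma (in comm_monoid) iter_sum_eq_finprod:
  assumes "f \<in> {1..n} \<rightarrow> carrier G" "b \<in> carrier G"
  shows "iter_sum (\<otimes>) f b n = b \<otimes> (\<Otimes>i\<in>{1..n}. f i)"
  using assms(1)
proof (induction n)
  case (Suc n)
  have "{1..Suc n} = insert (Suc n) {1..n}" by auto
  with Suc show ?case
    using assms(2) by (simp add: m_ac Pi_iff)
qed (use assms(2) in simp)

lemma (in comm_group) finprod_hom_of_nat_scale_eq_one:
  assumes "\<And>i. i \<in> A \<Longrightarrow> e i \<in> hom nonneg_reals G" "\<And>i. i \<in> A \<Longrightarrow> s i \<ge> 0"
    and "(\<Otimes>i\<in>A. e i (s i)) = \<one>"
  shows "(\<Otimes>i\<in>A. e i (of_nat n * s i)) = \<one>"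
proof (induction n)
  case 0
  show ?case using assms(1) hom_nonneg_reals_zero by (simp add: finprod_one_eqI)
next
  case (Suc n)
  have in_carrier: "(\<lambda>i. e i (r i)) \<in> A \<rightarrow> carrier G" if "\<And>i. i \<in> A \<Longrightarrow> r i \<ge> 0" for r
    using assms(1) that by (auto simp: hom_nonneg_reals_iff)
  have "(\<Otimes>i\<in>A. e i (of_nat (Suc n) * s i)) = (\<Otimes>i\<in>A. e i (s i) \<otimes> e i (of_nat n * s i))"
    using assms(1,2) by (intro finprod_cong') (auto simp: hom_nonneg_reals_iff distrib_right)
  also have "\<dots> = \<one>"
    using Suc assms(2,3) in_carrier by (simp add: finprod_multf)
  finally show ?case .
qed

text \<open>Substituting \<open>2 l\<close> for \<open>l\<close> and scaling every argument by \<open>2^(d+1)\<close> give two vanishing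
  products whose quotient no longer involves the top degree \<open>d + 1\<close>.\<close>
lemma (in comm_group) finprod_powers_eq_one_lower_degree:
  assumes hom: "\<And>i. i \<in> {1..Suc d} \<Longrightarrow> e i \<in> hom nonneg_reals G"
    and vanish: "\<And>l. l \<ge> 0 \<Longrightarrow> (\<Otimes>i\<in>{1..Suc d}. e i (l ^ i)) = \<one>"
    and "l \<ge> 0"
  shows "(\<Otimes>i\<in>{1..d}. e i ((2 ^ Suc d - 2 ^ i) * l ^ i)) = \<one>"
proof -
  define e' where "e' i t = e i ((2 ^ Suc d - 2 ^ i) * t)" for i t
  have gap: "(2::real) ^ Suc d - 2 ^ i \<ge> 0" if "i \<in> {1..Suc d}" for i
    using that power_increasing[of i "Suc d" "2::real"] by simp
  have e_carrier: "e i r \<in> carrier G" if "i \<in> {1..Suc d}" "r \<ge> 0" for i r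
    using hom that by (auto simp: hom_nonneg_reals_iff)
  have e'_carrier: "e' i r \<in> carrier G" if "i \<in> {1..Suc d}" "r \<ge> 0" for i r
    unfolding e'_def using e_carrier gap that by simp
  have "\<one> = (\<Otimes>i\<in>{1..Suc d}. e i (of_nat (2 ^ Suc d) * l ^ i))"
    using hom vanish \<open>l \<ge> 0\<close> by (intro finprod_hom_of_nat_scale_eq_one[symmetric]) auto
  also have "\<dots> = (\<Otimes>i\<in>{1..Suc d}. e i ((2 * l) ^ i) \<otimes> e' i (l ^ i))"
  proof (intro finprod_cong')
    fix i assume i: "i \<in> {1..Suc d}"
    have "of_nat (2 ^ Suc d) * l ^ i = (2 * l) ^ i + (2 ^ Suc d - 2 ^ i) * l ^ i"
      by (simp add: power_mult_distrib algebra_simps)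
    then show "e i (of_nat (2 ^ Suc d) * l ^ i) = e i ((2 * l) ^ i) \<otimes> e' i (l ^ i)"
      using hom[OF i] gap[OF i] \<open>l \<ge> 0\<close> by (simp add: e'_def hom_nonneg_reals_iff)
  qed (use \<open>l \<ge> 0\<close> e_carrier e'_carrier in auto)
  also have "\<dots> = (\<Otimes>i\<in>{1..Suc d}. e' i (l ^ i))"
    using \<open>l \<ge> 0\<close> vanish[of "2 * l"] e_carrier e'_carrier by (simp add: finprod_multf)
  also have "\<dots> = e' (Suc d) (l ^ Suc d) \<otimes> (\<Otimes>i\<in>{1..d}. e' i (l ^ i))"
    using \<open>l \<ge> 0\<close> e'_carrier by (simp add: atLeastAtMostSuc_conv Pi_iff)
  also have "e' (Suc d) (l ^ Suc d) = \<one>"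
    using hom_nonneg_reals_zero hom by (simp add: e'_def)
  finally show ?thesis
    using \<open>l \<ge> 0\<close> e'_carrier by (simp add: e'_def finprod_closed Pi_iff)
qed

lemma (in comm_group) hom_eq_one_if_finprod_powers_eq_one:
  assumes "\<And>i. i \<in> {1..d} \<Longrightarrow> e i \<in> hom nonneg_reals G"
    and "\<And>l. l \<ge> 0 \<Longrightarrow> (\<Otimes>i\<in>{1..d}. e i (l ^ i)) = \<one>"
    and "i \<in> {1..d}" "t \<ge> 0"
  shows "e i t = \<one>"
  using assms
proof (induction d arbitrary: e i t)
  case (Suc d)
  have lower: "e i r = \<one>" if i: "i \<in> {1..d}" and "r \<ge> 0" for i r
  proof -
    let ?c = "(2::real) ^ Suc d - 2 ^ i"
    have "?c > 0"
      using i power_strict_increasing[of i "Suc d" "2::real"] by simp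
    have scaled_hom: "(\<lambda>t. e j ((2 ^ Suc d - 2 ^ j) * t)) \<in> hom nonneg_reals G"
      if "j \<in> {1..d}" for j
      using Suc.prems(1) that power_increasing[of j "Suc d" "2::real"]
      by (intro hom_nonneg_reals_scale) auto
    have "e i r = e i (?c * (r / ?c))" using \<open>?c > 0\<close> by simp
    also have "\<dots> = \<one>"
      using Suc.IH[of "\<lambda>i t. e i ((2 ^ Suc d - 2 ^ i) * t)" i "r / ?c"] i \<open>r \<ge> 0\<close> \<open>?c > 0\<close>
        finprod_powers_eq_one_lower_degree[OF Suc.prems(1,2)] scaled_hom
      by simp
    finally show ?thesis .
  qed
  show ?case
  proof (cases "i = Suc d")
    case True
    define l where "l = root (Suc d) t"
    have "l \<ge> 0" "l ^ Suc d = t"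
      using Suc.prems(4) unfolding l_def by (simp, intro real_root_pow_pos2) auto
    have carrier: "e i r \<in> carrier G" if "i \<in> {1..Suc d}" "r \<ge> 0" for i r
      using Suc.prems(1) that by (auto simp: hom_nonneg_reals_iff)
    have "\<one> = (\<Otimes>i\<in>insert (Suc d) {1..d}. e i (l ^ i))"
      using Suc.prems(2)[of l] \<open>l \<ge> 0\<close> by (simp add: atLeastAtMostSuc_conv)
    also have "\<dots> = e (Suc d) (l ^ Suc d) \<otimes> (\<Otimes>i\<in>{1..d}. e i (l ^ i))"
      using carrier \<open>l \<ge> 0\<close> by (intro finprod_insert) auto
    also have "(\<Otimes>i\<in>{1..d}. e i (l ^ i)) = \<one>"
      using lower \<open>l \<ge> 0\<close> by (intro finprod_one_eqI) simp
    finally show ?thesis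
      using True carrier Suc.prems(4) \<open>l ^ Suc d = t\<close> by simp
  next
    case False
    then show ?thesis using lower Suc.prems(3,4) by simp
  qed
qed simp

lemma (in comm_group) power_expansion_unique:
  assumes "c \<in> carrier G" "c' \<in> carrier G"
    and "\<And>i. i \<in> {1..d} \<Longrightarrow> e i \<in> hom nonneg_reals G"
    and "\<And>i. i \<in> {1..d} \<Longrightarrow> e' i \<in> hom nonneg_reals G"
    and "\<And>l. l \<ge> 0 \<Longrightarrow> c \<otimes> (\<Otimes>i\<in>{1..d}. e i (l ^ i)) = c' \<otimes> (\<Otimes>i\<in>{1..d}. e' i (l ^ i))"
  shows "c = c'" and "\<And>i t. i \<in> {1..d} \<Longrightarrow> t \<ge> 0 \<Longrightarrow> e i t = e' i t"
proof -
  define q where "q i t = e i t \<otimes> inv (e' i t)" for i t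
  have q_hom: "q i \<in> hom nonneg_reals G" if "i \<in> {1..d}" for i
    unfolding q_def using assms(3,4)[OF that] by (intro hom_mult_pointwise hom_inv_pointwise)
  have carrier: "e i t \<in> carrier G" "e' i t \<in> carrier G" if "i \<in> {1..d}" "t \<ge> 0" for i t
    using assms(3,4) that by (auto simp: hom_nonneg_reals_iff)
  have quotient: "(c \<otimes> inv c') \<otimes> (\<Otimes>i\<in>{1..d}. q i (l ^ i)) = \<one>" if "l \<ge> 0" for l
  proof -
    let ?E = "\<Otimes>i\<in>{1..d}. e i (l ^ i)" and ?E' = "\<Otimes>i\<in>{1..d}. e' i (l ^ i)"
    have E: "?E \<in> carrier G" "?E' \<in> carrier G"
      using carrier that by (auto intro!: finprod_closed)
    have "(\<Otimes>i\<in>{1..d}. q i (l ^ i)) = ?E \<otimes> inv ?E'"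
      unfolding q_def using carrier that by (simp add: finprod_multf finprod_inv Pi_iff)
    then have "(c \<otimes> inv c') \<otimes> (\<Otimes>i\<in>{1..d}. q i (l ^ i)) = (c \<otimes> ?E) \<otimes> inv (c' \<otimes> ?E')"
      using assms(1,2) E by (simp add: inv_mult m_ac)
    then show ?thesis
      using assms(5)[OF that] assms(2) E by simp
  qed
  have "(\<Otimes>i\<in>{1..d}. q i (0 ^ i)) = \<one>"
    using q_hom hom_nonneg_reals_zero by (intro finprod_one_eqI) (simp add: zero_power)
  then have "c \<otimes> inv c' = \<one>"
    using quotient[of 0] assms(1,2) by simp
  then show "c = c'"
    using inv_equality[of c "inv c'"] assms(1,2) by simp
  have "(\<Otimes>i\<in>{1..d}. q i (l ^ i)) = \<one>" if "l \<ge> 0" for l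
    using quotient[OF that] \<open>c \<otimes> inv c' = \<one>\<close> q_hom that
    by (simp add: finprod_closed hom_nonneg_reals_iff Pi_iff)
  then have "q i t = \<one>" if "i \<in> {1..d}" "t \<ge> 0" for i t
    using hom_eq_one_if_finprod_powers_eq_one q_hom that by blast
  then show "e i t = e' i t" if "i \<in> {1..d}" "t \<ge> 0" for i t
    using inv_equality[of "e i t" "inv (e' i t)"] carrier[OF that] that by (simp add: q_def)
qed

lemma (in comm_group) expansion_components_multiplicative:
  assumes "r0 \<in> carrier G \<rightarrow> carrier G"
    and "\<And>i x. i \<in> {1..d} \<Longrightarrow> x \<in> carrier G \<Longrightarrow> (\<lambda>t. r i t x) \<in> hom nonneg_reals G"
    and "\<And>l x. l \<ge> 0 \<Longrightarrow> x \<in> carrier G \<Longrightarrow> D l x = r0 x \<otimes> (\<Otimes>i\<in>{1..d}. r i (l ^ i) x)"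
    and "\<And>l x y. l \<ge> 0 \<Longrightarrow> x \<in> carrier G \<Longrightarrow> y \<in> carrier G \<Longrightarrow> D l (x \<otimes> y) = D l x \<otimes> D l y"
    and "x \<in> carrier G" "y \<in> carrier G"
  shows "r0 (x \<otimes> y) = r0 x \<otimes> r0 y"
    and "\<And>i t. i \<in> {1..d} \<Longrightarrow> t \<ge> 0 \<Longrightarrow> r i t (x \<otimes> y) = r i t x \<otimes> r i t y"
proof -
  have xy: "x \<otimes> y \<in> carrier G" using assms(5,6) by simp
  have r0: "r0 z \<in> carrier G" if "z \<in> carrier G" for z
    using assms(1) that by blast
  have r: "r i t z \<in> carrier G" if "i \<in> {1..d}" "t \<ge> 0" "z \<in> carrier G" for i t z
    using assms(2)[OF that(1,3)] that(2) by (auto simp: hom_nonneg_reals_iff)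
  let ?P = "\<lambda>l z. \<Otimes>i\<in>{1..d}. r i (l ^ i) z"
  have P: "?P l z \<in> carrier G" if "l \<ge> 0" "z \<in> carrier G" for l z
    using r that by (auto intro: finprod_closed)
  have expansion_xy: "r0 (x \<otimes> y) \<otimes> ?P l (x \<otimes> y)
      = (r0 x \<otimes> r0 y) \<otimes> (\<Otimes>i\<in>{1..d}. r i (l ^ i) x \<otimes> r i (l ^ i) y)" if "l \<ge> 0" for l
  proof -
    have "r0 (x \<otimes> y) \<otimes> ?P l (x \<otimes> y) = D l x \<otimes> D l y"
      using assms(3)[OF that xy] assms(4)[OF that assms(5,6)] by simp
    also have "\<dots> = (r0 x \<otimes> ?P l x) \<otimes> (r0 y \<otimes> ?P l y)"
      using assms(3)[OF that] assms(5,6) by simp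
    also have "\<dots> = (r0 x \<otimes> r0 y) \<otimes> (?P l x \<otimes> ?P l y)"
      using r0 P that assms(5,6) by (simp add: m_ac)
    also have "?P l x \<otimes> ?P l y = (\<Otimes>i\<in>{1..d}. r i (l ^ i) x \<otimes> r i (l ^ i) y)"
      using r that assms(5,6) by (intro finprod_multf[symmetric]) auto
    finally show ?thesis .
  qed
  have hom_xy: "(\<lambda>t. r i t (x \<otimes> y)) \<in> hom nonneg_reals G" if "i \<in> {1..d}" for i
    using assms(2)[OF that xy] .
  have hom_x_y: "(\<lambda>t. r i t x \<otimes> r i t y) \<in> hom nonneg_reals G" if "i \<in> {1..d}" for i
    using assms(2)[OF that] assms(5,6) by (intro hom_mult_pointwise)
  note unique = power_expansion_unique[where c = "r0 (x \<otimes> y)" and c' = "r0 x \<otimes> r0 y" and d = d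
      and e = "\<lambda>i t. r i t (x \<otimes> y)"
      and e' = "\<lambda>i t. r i t x \<otimes> r i t y"]
  show "r0 (x \<otimes> y) = r0 x \<otimes> r0 y"
    by (rule unique(1)) (use r0 xy assms(5,6) hom_xy hom_x_y expansion_xy in auto)
  show "r i t (x \<otimes> y) = r i t x \<otimes> r i t y" if "i \<in> {1..d}" "t \<ge> 0" for i t
    by (rule unique(2)) (use r0 xy assms(5,6) hom_xy hom_x_y expansion_xy that in auto)
qed

section \<open>The Hausdorff metric on compact convex sets\<close>

lemma bdd_above_infdist_Kset:
  assumes "X \<in> Kset" "Y \<in> Kset"
  shows "bdd_above ((\<lambda>x. infdist x Y) ` X)"
proof -
  obtain y where "y \<in> Y" using assms by (auto simp: Kset_def)
  have "compact X" using assms by (simp add: Kset_def)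
  then have "bounded ((\<lambda>x. dist x y) ` X)"
    by (intro compact_imp_bounded compact_continuous_image continuous_intros)
  then obtain B where "\<forall>x\<in>X. dist x y \<le> B"
    by (auto simp: bounded_real bdd_above_def)
  then have "\<forall>x\<in>X. infdist x Y \<le> B"
    using infdist_le[OF \<open>y \<in> Y\<close>] order_trans by blast
  then show ?thesis by (auto intro: bdd_aboveI2)
qed

lemma hausdorff_dist_commute: "hausdorff_dist X Y = hausdorff_dist Y X"
  unfolding hausdorff_dist_def by (simp add: max.commute)

lemma infdist_le_hausdorff_dist:
  assumes "X \<in> Kset" "Y \<in> Kset" "x \<in> X"
  shows "infdist x Y \<le> hausdorff_dist X Y"
  using cSUP_upper[OF assms(3) bdd_above_infdist_Kset[OF assms(1,2)]]
  unfolding hausdorff_dist_def by linarith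

lemma hausdorff_dist_le:
  assumes "X \<in> Kset" "Y \<in> Kset"
    and "\<And>x. x \<in> X \<Longrightarrow> infdist x Y \<le> r" "\<And>y. y \<in> Y \<Longrightarrow> infdist y X \<le> r"
  shows "hausdorff_dist X Y \<le> r"
  using assms unfolding hausdorff_dist_def by (auto simp: Kset_def intro!: cSUP_least)

lemma hausdorff_dist_nonneg:
  assumes "X \<in> Kset" "Y \<in> Kset"
  shows "0 \<le> hausdorff_dist X Y"
proof -
  obtain x where "x \<in> X" using assms by (auto simp: Kset_def)
  then show ?thesis
    using infdist_le_hausdorff_dist[OF assms] infdist_nonneg order_trans by metis
qed

lemma hausdorff_dist_eq_0_iff:
  assumes "X \<in> Kset" "Y \<in> Kset"
  shows "hausdorff_dist X Y = 0 \<longleftrightarrow> X = Y"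
proof
  assume "X = Y"
  then show "hausdorff_dist X Y = 0"
    using hausdorff_dist_le[of X X 0] hausdorff_dist_nonneg assms by fastforce
next
  assume 0: "hausdorff_dist X Y = 0"
  have "closed X" "closed Y" using assms by (auto simp: Kset_def compact_imp_closed)
  then have "X \<subseteq> Y" "Y \<subseteq> X"
    using infdist_le_hausdorff_dist[OF assms] infdist_le_hausdorff_dist[OF assms(2,1)]
      infdist_pos_not_in_closed 0 hausdorff_dist_commute[of X Y] assms
    by (fastforce simp: Kset_def)+
  then show "X = Y" by blast
qed

lemma hausdorff_dist_triangle:
  assumes "X \<in> Kset" "Y \<in> Kset" "Z \<in> Kset"
  shows "hausdorff_dist X Z \<le> hausdorff_dist X Y + hausdorff_dist Y Z"
proof -
  have Y: "closed Y" "Y \<noteq> {}" using assms by (auto simp: Kset_def compact_imp_closed)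
  have one_side: "infdist x Z \<le> hausdorff_dist X Y + hausdorff_dist Y Z"
    if "X \<in> Kset" "Z \<in> Kset" "x \<in> X" for X Z x
  proof -
    obtain y where "y \<in> Y" "infdist x Y = dist x y"
      using infdist_attains_inf[OF Y] by metis
    then show ?thesis
      using infdist_triangle[of x Z y] infdist_le_hausdorff_dist[OF that(1) assms(2) that(3)]
        infdist_le_hausdorff_dist[OF assms(2) that(2) \<open>y \<in> Y\<close>] by linarith
  qed
  show ?thesis
  proof (rule hausdorff_dist_le[OF assms(1,3)])
    fix z assume "z \<in> Z"
    then show "infdist z X \<le> hausdorff_dist X Y + hausdorff_dist Y Z"
      using one_side[OF assms(3,1)] hausdorff_dist_commute add.commute by metis
  qed (use one_side assms in blast)
qed

text \<open>Outside \<^const>\<open>Kset\<close> the suprema in \<^const>\<open>hausdorff_dist\<close> are unspecified, so \<open>Kdist\<close>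
  is set to \<open>0\<close> there to satisfy the metric axioms on the whole type.\<close>
definition Kdist :: "'v::euclidean_space set \<Rightarrow> 'v set \<Rightarrow> real" where
  "Kdist X Y = (if X \<in> Kset \<and> Y \<in> Kset then hausdorff_dist X Y else 0)"

interpretation Kmetric: Metric_space Kset Kdist
  by unfold_locales
    (auto simp: Kdist_def hausdorff_dist_nonneg hausdorff_dist_commute hausdorff_dist_eq_0_iff
      hausdorff_dist_triangle)

lemma Ktop_eq_mtopology: "Ktop = Kmetric.mtopology"
  unfolding Ktop_def Kmetric.mtopology_def Kmetric.mopen_def Kmetric.mball_def
  by (rule arg_cong[where f = topology]) (fastforce simp: Kdist_def fun_eq_iff)

section \<open>A Hausdorff group topology on Z K(V)\<close>

lemma zadd_eq_plus: "zadd f g = f + g"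
  by (simp add: zadd_def fun_eq_iff)

lemma zneg_eq_uminus: "zneg f = - f"
  by (simp add: zneg_def fun_eq_iff)

lemma zzero_eq_zero: "zzero = 0"
  by (simp add: zzero_def fun_eq_iff)

lemma ZK_add: "f \<in> ZK \<Longrightarrow> g \<in> ZK \<Longrightarrow> f + g \<in> ZK"
proof -
  assume "f \<in> ZK" "g \<in> ZK"
  moreover have "{X. (f + g) X \<noteq> 0} \<subseteq> {X. f X \<noteq> 0} \<union> {X. g X \<noteq> 0}" by auto
  ultimately show ?thesis unfolding ZK_def by (auto intro: finite_subset)
qed

lemma ZK_uminus: "f \<in> ZK \<Longrightarrow> - f \<in> ZK"
  unfolding ZK_def by simp

lemma ZK_zero: "0 \<in> ZK"
  unfolding ZK_def by simp

lemma ZK_diff: "f \<in> ZK \<Longrightarrow> g \<in> ZK \<Longrightarrow> f - g \<in> ZK"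
  using ZK_add ZK_uminus by (metis diff_conv_add_uminus)

lemma support_zgen: "{Y. zgen X Y \<noteq> 0} = {X}"
  by (auto simp: zgen_def)

lemma zgen_in_ZK: "X \<in> Kset \<Longrightarrow> zgen X \<in> ZK"
  by (simp add: ZK_def support_zgen)

definition tent :: "'v::euclidean_space set \<Rightarrow> 'v set \<times> real \<Rightarrow> real" where
  "tent X = (\<lambda>(Y, r). max 0 (r - Kdist X Y))"

definition tent_transform :: "('v::euclidean_space set \<Rightarrow> int) \<Rightarrow> 'v set \<times> real \<Rightarrow> real" where
  "tent_transform f = (\<lambda>p. \<Sum>X | f X \<noteq> 0. of_int (f X) * tent X p)"

lemma tent_transform_eq_sum:
  assumes "finite S" "{X. f X \<noteq> 0} \<subseteq> S"
  shows "tent_transform f p = (\<Sum>X\<in>S. of_int (f X) * tent X p)"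
  unfolding tent_transform_def by (rule sum.mono_neutral_left) (use assms in auto)

lemma tent_transform_add:
  assumes "f \<in> ZK" "g \<in> ZK"
  shows "tent_transform (f + g) = tent_transform f + tent_transform g"
proof
  fix p
  let ?S = "{X. f X \<noteq> 0} \<union> {X. g X \<noteq> 0}"
  have S: "finite ?S" using assms by (simp add: ZK_def)
  have "tent_transform (f + g) p = (\<Sum>X\<in>?S. of_int ((f + g) X) * tent X p)"
    by (rule tent_transform_eq_sum[OF S]) auto
  also have "\<dots> = (\<Sum>X\<in>?S. of_int (f X) * tent X p) + (\<Sum>X\<in>?S. of_int (g X) * tent X p)"
    by (simp add: sum.distrib distrib_right)
  also have "\<dots> = tent_transform f p + tent_transform g p"
    by (simp add: tent_transform_eq_sum[OF S])
  finally show "tent_transform (f + g) p = (tent_transform f + tent_transform g) p" by simp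
qed

lemma tent_transform_uminus: "tent_transform (- f) = - tent_transform f"
  unfolding tent_transform_def by (auto simp: fun_eq_iff sum_negf)

lemma tent_transform_zgen: "tent_transform (zgen X) = tent X"
  unfolding tent_transform_def support_zgen by (simp add: zgen_def fun_eq_iff)

text \<open>Evaluate at \<open>(X, r)\<close> with \<open>r\<close> below the distance from \<open>X\<close> to the rest of the support:
  only the tent at \<open>X\<close> survives.\<close>
lemma tent_transform_eq_0_imp:
  assumes "f \<in> ZK" "tent_transform f = 0"
  shows "f = 0"
proof (rule ccontr)
  assume "f \<noteq> 0"
  then obtain X where X: "f X \<noteq> 0" by (auto simp: fun_eq_iff)
  let ?S = "{X. f X \<noteq> 0}"
  have S: "finite ?S" "?S \<subseteq> Kset" using assms(1) by (auto simp: ZK_def)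
  define r where "r = Min (insert 1 (Kdist X ` (?S - {X})))"
  have "Kdist X Y > 0" if "Y \<in> ?S - {X}" for Y
  proof -
    have "X \<in> Kset" "Y \<in> Kset" "Y \<noteq> X" using that S X by auto
    then show ?thesis using Kmetric.zero[of X Y] Kmetric.nonneg[of X Y] by fastforce
  qed
  then have "r > 0"
    using S by (simp add: r_def)
  have "tent Y (X, r) = 0" if "Y \<in> ?S - {X}" for Y
    using that S by (auto simp: tent_def r_def Kmetric.commute[of Y X])
  then have "tent_transform f (X, r) = of_int (f X) * tent X (X, r)"
    using X S by (simp add: tent_transform_def sum.remove)
  also have "tent X (X, r) = r"
    using \<open>r > 0\<close> X S by (auto simp: tent_def)
  finally have "tent_transform f (X, r) \<noteq> 0" using X \<open>r > 0\<close> by simp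
  then show False using assms(2) by simp
qed

lemma inj_on_tent_transform: "inj_on tent_transform ZK"
proof (rule inj_onI)
  fix f g assume fg: "f \<in> ZK" "g \<in> ZK" "tent_transform f = tent_transform g"
  then have "tent_transform (f - g) = 0"
    using tent_transform_add[OF fg(1) ZK_uminus[OF fg(2)]] by (simp add: tent_transform_uminus)
  then show "f = g" using tent_transform_eq_0_imp[OF ZK_diff[OF fg(1,2)]] by simp
qed

definition tent_topology :: "('v::euclidean_space set \<Rightarrow> int) topology" where
  "tent_topology = pullback_topology ZK tent_transform euclidean"

lemma topspace_tent_topology: "topspace tent_topology = ZK"
  by (simp add: tent_topology_def topspace_pullback_topology)

lemma continuous_map_tent_transform: "continuous_map tent_topology euclidean tent_transform"
  unfolding tent_topology_def using continuous_map_pullback[OF continuous_map_id]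
  by (simp add: o_def id_def)

lemma continuous_map_tent_topology_iff:
  "continuous_map X tent_topology h \<longleftrightarrow>
     h \<in> topspace X \<rightarrow> ZK \<and> (\<forall>p. continuous_map X euclideanreal (\<lambda>x. tent_transform (h x) p))"
  (is "?lhs \<longleftrightarrow> ?rhs")
proof
  assume ?lhs
  then have "continuous_map X euclidean (tent_transform \<circ> h)"
    using continuous_map_tent_transform by (rule continuous_map_compose)
  then show ?rhs
    using \<open>?lhs\<close> continuous_map_funspace[of X tent_topology h]
    unfolding euclidean_product_topology[symmetric] continuous_map_componentwise_UNIV
    by (simp add: topspace_tent_topology o_def)
next
  assume ?rhs
  then show ?lhs
    unfolding tent_topology_def
    by (intro continuous_map_pullback')
      (auto simp: o_def euclidean_product_topology[symmetric] continuous_map_componentwise_UNIV)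
qed

lemma hausdorff_group_topology_tent_topology: "hausdorff_group_topology tent_topology"
  unfolding hausdorff_group_topology_def
proof (intro conjI)
  show "topspace tent_topology = ZK" by (rule topspace_tent_topology)
  have "Hausdorff_space (euclidean :: ('v set \<times> real \<Rightarrow> real) topology)"
    unfolding euclidean_product_topology[symmetric] Hausdorff_space_product_topology by simp
  then show "Hausdorff_space tent_topology"
    using Hausdorff_space_injective_preimage continuous_map_tent_transform inj_on_tent_transform
    by (metis topspace_tent_topology)
  have coord: "continuous_map tent_topology euclideanreal (\<lambda>f. tent_transform f p)" for p
    using continuous_map_tent_topology_iff[of tent_topology "\<lambda>f. f"] by (cases p) auto
  show "continuous_map (prod_topology tent_topology tent_topology) tent_topology
          (\<lambda>(f, g). zadd f g)"
    unfolding continuous_map_tent_topology_iff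
  proof (intro conjI allI)
    show "(\<lambda>(f, g). zadd f g) \<in> topspace (prod_topology tent_topology tent_topology) \<rightarrow> ZK"
      by (auto simp: topspace_tent_topology zadd_eq_plus ZK_add)
    fix p
    have "continuous_map (prod_topology tent_topology tent_topology) euclideanreal
        (\<lambda>fg. tent_transform (fst fg) p + tent_transform (snd fg) p)"
      by (intro continuous_intros continuous_map_compose[OF continuous_map_fst coord, unfolded o_def]
          continuous_map_compose[OF continuous_map_snd coord, unfolded o_def])
    then show "continuous_map (prod_topology tent_topology tent_topology) euclideanreal
        (\<lambda>fg. tent_transform (case fg of (f, g) \<Rightarrow> zadd f g) p)"
      by (rule continuous_map_eq) (auto simp: topspace_tent_topology zadd_eq_plus tent_transform_add)
  qed
  show "continuous_map tent_topology tent_topology zneg"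
    unfolding continuous_map_tent_topology_iff
    using coord by (auto simp: topspace_tent_topology zneg_eq_uminus ZK_uminus tent_transform_uminus
        intro: continuous_map_minus)
qed

lemma continuous_map_zgen_tent_topology: "continuous_map Ktop tent_topology zgen"
  unfolding continuous_map_tent_topology_iff tent_transform_zgen
proof (intro conjI allI)
  show "zgen \<in> topspace Ktop \<rightarrow> ZK"
    by (auto simp: Ktop_eq_mtopology zgen_in_ZK)
  fix p :: "'a set \<times> real"
  obtain Y r where p: "p = (Y, r)" by fastforce
  have "continuous_map Ktop euclideanreal (\<lambda>X. Kdist X Y)"
  proof (cases "Y \<in> Kset")
    case True
    then show ?thesis
      using continuous_map_mdist[of Ktop "metric (Kset, Kdist)" "\<lambda>X. X" "\<lambda>X. Y"]
      by (simp add: Ktop_eq_mtopology)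
  qed (simp add: Kdist_def)
  then show "continuous_map Ktop euclideanreal (\<lambda>X. tent X p)"
    unfolding tent_def p by (simp add: continuous_map_real_max continuous_map_diff)
qed

section \<open>The abelian group CB(V,G)\<close>

definition Kgroup_topologies :: "('v::euclidean_space set \<Rightarrow> int) topology set" where
  "Kgroup_topologies = {T. hausdorff_group_topology T \<and> continuous_map Ktop T zgen}"

lemma FZtop_eq: "FZtop = topology_generated_by (\<Union>T\<in>Kgroup_topologies. {U. openin T U})"
  unfolding FZtop_def Kgroup_topologies_def by (rule arg_cong[where f = topology_generated_by]) blast

lemma topspace_Kgroup_topologies: "T \<in> Kgroup_topologies \<Longrightarrow> topspace T = ZK"
  by (simp add: Kgroup_topologies_def hausdorff_group_topology_def)

text \<open>Without a member of \<^const>\<open>Kgroup_topologies\<close>, \<^const>\<open>FZtop\<close> would have empty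
  topspace; \<^const>\<open>tent_topology\<close> is that member.\<close>
lemma topspace_FZtop: "topspace FZtop = ZK"
proof -
  have "tent_topology \<in> Kgroup_topologies"
    by (simp add: Kgroup_topologies_def hausdorff_group_topology_tent_topology
        continuous_map_zgen_tent_topology)
  then have "ZK \<in> (\<Union>T\<in>Kgroup_topologies. {U. openin T U})"
    using topspace_tent_topology by (metis (mono_tags) UN_I mem_Collect_eq openin_topspace)
  moreover have "\<Union>(\<Union>T\<in>Kgroup_topologies. {U. openin T U}) \<subseteq> ZK"
    using openin_subset topspace_Kgroup_topologies by blast
  ultimately show ?thesis
    unfolding FZtop_eq topology_generated_by_topspace by blast
qed

lemma continuous_map_FZtop_id:
  assumes "T \<in> Kgroup_topologies"
  shows "continuous_map FZtop T (\<lambda>f. f)"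
  unfolding continuous_map_alt
proof (intro conjI allI impI)
  fix U assume "openin T U"
  then have "openin FZtop U"
    unfolding FZtop_eq using assms by (intro topology_generated_by_Basis) blast
  then show "openin FZtop ((\<lambda>f. f) -` U \<inter> topspace FZtop)"
    by (simp add: Int_absorb2 openin_subset)
qed (use assms in \<open>simp add: topspace_FZtop topspace_Kgroup_topologies\<close>)

lemma continuous_map_into_FZtop:
  fixes h :: "'a \<Rightarrow> 'v::euclidean_space set \<Rightarrow> int"
  assumes "h \<in> topspace X \<rightarrow> ZK" "\<And>T. T \<in> Kgroup_topologies \<Longrightarrow> continuous_map X T h"
  shows "continuous_map X FZtop h"
  unfolding continuous_map_def
proof (intro conjI allI impI)
  show "h \<in> topspace X \<rightarrow> topspace FZtop" using assms(1) by (simp add: topspace_FZtop)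
  fix U :: "('v set \<Rightarrow> int) set"
  assume "openin FZtop U"
  then have "generate_topology_on (\<Union>T\<in>Kgroup_topologies. {U. openin T U}) U"
    unfolding FZtop_eq by (rule openin_topology_generated_by)
  then show "openin X {x \<in> topspace X. h x \<in> U}"
  proof induction
    case (Int a b)
    have "{x \<in> topspace X. h x \<in> a \<inter> b} = {x \<in> topspace X. h x \<in> a} \<inter> {x \<in> topspace X. h x \<in> b}"
      by auto
    then show ?case using Int by auto
  next
    case (UN K)
    have "{x \<in> topspace X. h x \<in> \<Union>K} = (\<Union>k\<in>K. {x \<in> topspace X. h x \<in> k})" by auto
    then show ?case using UN by auto
  next
    case (Basis s)
    then show ?case using assms(2) openin_continuous_map_preimage by blast
  qed auto
qed

lemma continuous_map_FZtop_add: "continuous_map (prod_topology FZtop FZtop) FZtop (\<lambda>(f, g). f + g)"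
proof (rule continuous_map_into_FZtop)
  show "(\<lambda>(f, g). f + g) \<in> topspace (prod_topology FZtop FZtop) \<rightarrow> ZK"
    by (auto simp: topspace_FZtop ZK_add)
  fix T assume T: "T \<in> Kgroup_topologies"
  have "continuous_map (prod_topology FZtop FZtop) (prod_topology T T) id"
    using continuous_map_prod_top[of FZtop FZtop T T "\<lambda>f. f" "\<lambda>f. f"] continuous_map_FZtop_id[OF T]
    by simp
  moreover have "continuous_map (prod_topology T T) T (\<lambda>(f, g). zadd f g)"
    using T by (simp add: Kgroup_topologies_def hausdorff_group_topology_def)
  ultimately have "continuous_map (prod_topology FZtop FZtop) T
      ((\<lambda>(f, g). zadd f g) \<circ> id)"
    by (rule continuous_map_compose)
  moreover have "(\<lambda>(f, g). zadd f g) \<circ> id = (\<lambda>(f, g). f + g)"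
    by (auto simp: zadd_eq_plus)
  ultimately show "continuous_map (prod_topology FZtop FZtop) T (\<lambda>(f, g). f + g)"
    by metis
qed

lemma closure_of_add_closed:
  fixes X :: "'a::plus topology"
  assumes "continuous_map (prod_topology X X) X (\<lambda>(x, y). x + y)"
    and "\<And>x y. x \<in> S \<Longrightarrow> y \<in> S \<Longrightarrow> x + y \<in> S"
    and "x \<in> X closure_of S" "y \<in> X closure_of S"
  shows "x + y \<in> X closure_of S"
proof -
  have "(x, y) \<in> prod_topology X X closure_of (S \<times> S)"
    using assms(3,4) by (simp add: closure_of_Times)
  then have "x + y \<in> X closure_of ((\<lambda>(x, y). x + y) ` (S \<times> S))"
    using continuous_map_image_closure_subset[OF assms(1)] by fastforce
  moreover have "(\<lambda>(x, y). x + y) ` (S \<times> S) \<subseteq> S" using assms(2) by auto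
  ultimately show ?thesis using closure_of_mono by blast
qed

lemma zspan_zero: "0 \<in> zspan A"
  unfolding zspan_def zzero_eq_zero by blast

lemma zspan_add: "f \<in> zspan A \<Longrightarrow> g \<in> zspan A \<Longrightarrow> f + g \<in> zspan A"
  unfolding zspan_def zadd_eq_plus by blast

lemma zero_in_CBker: "0 \<in> CBker G"
  unfolding CBker_def using closure_of_subset_Int topspace_FZtop ZK_zero zspan_zero by fastforce

lemma add_in_CBker: "f \<in> CBker G \<Longrightarrow> g \<in> CBker G \<Longrightarrow> f + g \<in> CBker G"
  unfolding CBker_def
  using closure_of_add_closed[OF continuous_map_FZtop_add] zspan_add by blast

lemma cls_eq: "cls G f = {g \<in> ZK. g - f \<in> CBker G}"
  by (simp add: cls_def zadd_eq_plus zneg_eq_uminus)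

lemma cls_add:
  assumes "f \<in> ZK" "g \<in> ZK"
  shows "cbadd (cls G f) (cls G g) = cls G (f + g)"
proof (intro equalityI subsetI)
  fix h assume "h \<in> cbadd (cls G f) (cls G g)"
  then obtain a b where "h = a + b" "a \<in> cls G f" "b \<in> cls G g"
    unfolding cbadd_def zadd_eq_plus by blast
  moreover have "a + b - (f + g) = (a - f) + (b - g)" by simp
  ultimately show "h \<in> cls G (f + g)"
    using add_in_CBker by (metis (no_types, lifting) ZK_add cls_eq mem_Collect_eq)
next
  fix h assume h: "h \<in> cls G (f + g)"
  then have "h - g \<in> cls G f" "g \<in> cls G g"
    using assms zero_in_CBker by (auto simp: cls_eq ZK_diff diff_diff_eq add.commute)
  moreover have "h = (h - g) + g" by simp
  ultimately show "h \<in> cbadd (cls G f) (cls G g)"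
    unfolding cbadd_def zadd_eq_plus by blast
qed

lemma cls_in_CB: "f \<in> ZK \<Longrightarrow> cls G f \<in> CB G"
  unfolding CB_def by blast

definition CB_group :: "('v::euclidean_space \<Rightarrow> 'v) set \<Rightarrow> ('v set \<Rightarrow> int) set monoid" where
  "CB_group G = \<lparr>carrier = CB G, mult = cbadd, one = cls G 0\<rparr>"

lemma CB_group_simps [simp]:
  "carrier (CB_group G) = CB G" "mult (CB_group G) = cbadd" "one (CB_group G) = cls G 0"
  by (simp_all add: CB_group_def)

lemma comm_group_CB_group: "comm_group (CB_group G)"
proof (rule comm_groupI; simp only: CB_group_simps)
  show "cls G 0 \<in> CB G" by (simp add: cls_in_CB ZK_zero)
  fix x y z assume "x \<in> CB G" "y \<in> CB G" "z \<in> CB G"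
  then obtain f g h where "f \<in> ZK" "g \<in> ZK" "h \<in> ZK" "x = cls G f" "y = cls G g" "z = cls G h"
    unfolding CB_def by blast
  then show "cbadd x y \<in> CB G" "cbadd (cbadd x y) z = cbadd x (cbadd y z)"
      "cbadd x y = cbadd y x" "cbadd (cls G 0) x = x"
    by (simp_all add: cls_add cls_in_CB ZK_add ZK_zero add_ac)
  have "cbadd (cls G (- f)) x = cls G 0"
    using \<open>f \<in> ZK\<close> \<open>x = cls G f\<close> by (simp add: cls_add ZK_uminus)
  then show "\<exists>w\<in>CB G. cbadd w x = cls G 0"
    using cls_in_CB ZK_uminus \<open>f \<in> ZK\<close> by blast
qed

lemma topspace_CBtop: "topspace (CBtop G) = CB G"
proof -
  let ?open = "\<lambda>U. U \<subseteq> CB G \<and> openin FZtop {f \<in> ZK. cls G f \<in> U}"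
  have "istopology ?open"
  proof -
    have "{f \<in> ZK. cls G f \<in> S \<inter> T} = {f \<in> ZK. cls G f \<in> S} \<inter> {f \<in> ZK. cls G f \<in> T}"
      "{f \<in> ZK. cls G f \<in> \<Union>K} = (\<Union>U\<in>K. {f \<in> ZK. cls G f \<in> U})" for S T K
      by auto
    then show ?thesis unfolding istopology_def by auto
  qed
  then have "openin (CBtop G) U \<longleftrightarrow> ?open U" for U
    unfolding CBtop_def by (simp add: topology_inverse')
  moreover have "{f \<in> ZK. cls G f \<in> CB G} = topspace FZtop"
    by (auto simp: topspace_FZtop cls_in_CB)
  then have "?open (CB G)" by simp
  ultimately show ?thesis unfolding topspace_def by blast
qed

lemma topspace_RCBtop: "topspace (RCBtop G) = {0..} \<times> CB G"
  by (simp add: RCBtop_def topspace_CBtop)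

lemma dilation_component0_closed:
  assumes "are_dilation_components G D \<rho>0 \<rho>"
  shows "\<rho>0 \<in> CB G \<rightarrow> CB G"
proof -
  have "continuous_map (CBtop G) (CBtop G) \<rho>0"
    using assms unfolding are_dilation_components_def by blast
  from continuous_map_funspace[OF this] show ?thesis by (simp add: topspace_CBtop)
qed

lemma dilation_component_hom:
  fixes G :: "('v::euclidean_space \<Rightarrow> 'v) set"
  assumes "are_dilation_components G D \<rho>0 \<rho>" "i \<in> {1..DIM('v)}" "x \<in> CB G"
  shows "(\<lambda>t. \<rho> i t x) \<in> hom nonneg_reals (CB_group G)"
proof -
  have cont: "continuous_map (RCBtop G) (CBtop G) (\<lambda>(l, x). \<rho> i l x)"
    and add: "\<forall>a\<ge>0. \<forall>b\<ge>0. \<rho> i (a + b) x = cbadd (\<rho> i a x) (\<rho> i b x)"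
    using assms unfolding are_dilation_components_def by blast+
  have "\<rho> i t x \<in> CB G" if "t \<ge> 0" for t
    using funcset_mem[OF continuous_map_funspace[OF cont], of "(t, x)"] that assms(3)
    by (simp add: topspace_CBtop topspace_RCBtop)
  then show ?thesis
    using add by (simp add: hom_nonneg_reals_iff)
qed

lemma dilation_map_expansion:
  fixes G :: "('v::euclidean_space \<Rightarrow> 'v) set"
  assumes "are_dilation_components G D \<rho>0 \<rho>" "l \<ge> 0" "x \<in> CB G"
  shows "D l x = cbadd (\<rho>0 x) (\<Otimes>\<^bsub>CB_group G\<^esub>i\<in>{1..DIM('v)}. \<rho> i (l ^ i) x)"
proof -
  interpret CB: comm_group "CB_group G" by (rule comm_group_CB_group)
  have "(\<lambda>i. \<rho> i (l ^ i) x) \<in> {1..DIM('v)} \<rightarrow> CB G"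
    using dilation_component_hom[OF assms(1) _ assms(3)] assms(2)
    by (auto simp: hom_nonneg_reals_iff)
  moreover have "D l x = iter_sum cbadd (\<lambda>i. \<rho> i (l ^ i) x) (\<rho>0 x) DIM('v)"
    using assms unfolding are_dilation_components_def by blast
  ultimately show ?thesis
    using CB.iter_sum_eq_finprod[of "\<lambda>i. \<rho> i (l ^ i) x" "DIM('v)" "\<rho>0 x", unfolded CB_group_simps]
      funcset_mem[OF dilation_component0_closed[OF assms(1)] assms(3)]
    by simp
qed

theorem proposition6p3:
  fixes G :: "('v::euclidean_space \<Rightarrow> 'v) set"
    and D :: "real \<Rightarrow> ('v set \<Rightarrow> int) set \<Rightarrow> ('v set \<Rightarrow> int) set"
    and \<rho>0 :: "('v set \<Rightarrow> int) set \<Rightarrow> ('v set \<Rightarrow> int) set"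
    and \<rho> :: "nat \<Rightarrow> real \<Rightarrow> ('v set \<Rightarrow> int) set \<Rightarrow> ('v set \<Rightarrow> int) set"
  assumes "affine_group_with_translations G"
    and "is_dilation_map G D"
    and "are_dilation_components G D \<rho>0 \<rho>"
  shows "(\<forall>x\<in>CB G. \<forall>y\<in>CB G. \<rho>0 (cbadd x y) = cbadd (\<rho>0 x) (\<rho>0 y)) \<and>
         (\<forall>i\<in>{1..DIM('v)}. \<forall>l\<ge>0. \<forall>x\<in>CB G. \<forall>y\<in>CB G.
            \<rho> i l (cbadd x y) = cbadd (\<rho> i l x) (\<rho> i l y))"
proof -
  interpret CB: comm_group "CB_group G" by (rule comm_group_CB_group)
  have D_mult: "\<And>l x y. l \<ge> 0 \<Longrightarrow> x \<in> CB G \<Longrightarrow> y \<in> CB G \<Longrightarrow>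
      D l (cbadd x y) = cbadd (D l x) (D l y)"
    using assms(2) unfolding is_dilation_map_def by blast
  note components_mult = CB.expansion_components_multiplicative[of \<rho>0 "DIM('v)" \<rho> D,
      unfolded CB_group_simps, OF dilation_component0_closed[OF assms(3)]
      dilation_component_hom[OF assms(3)] dilation_map_expansion[OF assms(3)] D_mult]
  show ?thesis
    using components_mult by blast
qed

end
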